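(* Let $R$ be a commutative ring, $m\ge 1$, $A=(a_{ij})\in R^{m\times m}$, $b\in R^m$ and $x=(x_1,\dots,x_m)$. Let $L\in R^{(m+1)\times(m+1)}$ be the matrix with $L_{ij}=a_{ij}$ for $i,j\le m$, $L_{i,m+1}=b_i$ for $i\le m$, $L_{m+1,j}=-\sum_{k=1}^m a_{kj}$ for $j\le m$, and $L_{m+1,m+1}=-\sum_{k=1}^m b_k$. Let $\mathcal{G}$ be a labeled multidigraph (without self-loops, node set $\{1,\dots,m+1\}$) with Laplacian $L$. Then $\det(A)=(-1)^m\Upsilon_\mathcal{G}(m+1)$. Further, if $\det(A)\neq 0$, then the solution to the linear system $Ax+b=0$ is \[x_i=\frac{\Upsilon_\mathcal{G}(i)}{\Upsilon_\mathcal{G}(m+1)}\in\widehat{R},\qquad i=1,\dots,m,\] where $\widehat{R}\supseteq R$ is an extension ring of $R$ in which these quotients are defined.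
   Context: A multidigraph $\mathcal{G}=(\mathcal{N},\mathcal{E})$ consists of finite sets of nodes $\mathcal{N}$ and edges $\mathcal{E}$ with source and target maps $s,t\colon\mathcal{E}\to\mathcal{N}$ (parallel edges allowed); here there are no self-loops and $\mathcal{N}=\{1,\dots,m+1\}$. A labeling is a map $\pi\colon\mathcal{E}\to R$, extended to subsets by $\pi(\mathcal{E}')=\prod_{e\in\mathcal{E}'}\pi(e)$. A tree is a subgraph whose underlying undirected graph is connected and acyclic; it is rooted at a node $N$ if $N$ is its only node without outgoing edges. A spanning tree has node set $\mathcal{N}$ and is identified with its edge set. For $j\in\mathcal{N}$, $\Theta_\mathcal{G}(j)$ is the set of spanning trees of $\mathcal{G}$ rooted at $j$ and $\Upsilon_\mathcal{G}(j)=\sum_{\tau\in\Theta_\mathcal{G}(j)}\pi(\tau)$ (zero if the set is empty). The Laplacian of $\mathcal{G}$ is the $(m+1)\times(m+1)$ matrix with $L_{ij}=\sum_{e:\,s(e)=j,\,t(e)=i}\pi(e)$ for $i\ne j$ and $L_{ii}=-\sum_{k\ne i}L_{ki}$. *)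

theory Defs
  imports "Jordan_Normal_Form.Determinant"
begin

(* A labeled multidigraph: node set N, edge set E (of an arbitrary type 'e),
   source/target maps s t, labeling lbl. *)

definition multidigraph_wf :: "nat set \<Rightarrow> 'e set \<Rightarrow> ('e \<Rightarrow> nat) \<Rightarrow> ('e \<Rightarrow> nat) \<Rightarrow> bool" where
  "multidigraph_wf N E s t \<longleftrightarrow> finite N \<and> finite E \<and> (\<forall>e\<in>E. s e \<in> N \<and> t e \<in> N)"

definition no_self_loops :: "'e set \<Rightarrow> ('e \<Rightarrow> nat) \<Rightarrow> ('e \<Rightarrow> nat) \<Rightarrow> bool" where
  "no_self_loops E s t \<longleftrightarrow> (\<forall>e\<in>E. s e \<noteq> t e)"

definition joins :: "('e \<Rightarrow> nat) \<Rightarrow> ('e \<Rightarrow> nat) \<Rightarrow> 'e \<Rightarrow> nat \<Rightarrow> nat \<Rightarrow> bool" where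
  "joins s t e u v \<longleftrightarrow> (s e = u \<and> t e = v) \<or> (s e = v \<and> t e = u)"

definition und_connected :: "nat set \<Rightarrow> 'e set \<Rightarrow> ('e \<Rightarrow> nat) \<Rightarrow> ('e \<Rightarrow> nat) \<Rightarrow> bool" where
  "und_connected V T s t \<longleftrightarrow>
     (\<forall>u\<in>V. \<forall>v\<in>V. (u, v) \<in> {(x, y). \<exists>e\<in>T. joins s t e x y}\<^sup>*)"

definition und_has_cycle :: "'e set \<Rightarrow> ('e \<Rightarrow> nat) \<Rightarrow> ('e \<Rightarrow> nat) \<Rightarrow> bool" where
  "und_has_cycle T s t \<longleftrightarrow>
     (\<exists>es vs. length es \<ge> 1 \<and> length vs = length es + 1 \<and> distinct es \<and> set es \<subseteq> T \<and>
        vs ! 0 = vs ! length es \<and> distinct (butlast vs) \<and>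
        (\<forall>i < length es. joins s t (es ! i) (vs ! i) (vs ! (i + 1))))"

definition is_tree :: "nat set \<Rightarrow> 'e set \<Rightarrow> ('e \<Rightarrow> nat) \<Rightarrow> ('e \<Rightarrow> nat) \<Rightarrow> bool" where
  "is_tree V T s t \<longleftrightarrow> (\<forall>e\<in>T. s e \<in> V \<and> t e \<in> V) \<and>
     und_connected V T s t \<and> \<not> und_has_cycle T s t"

definition rooted_at :: "nat set \<Rightarrow> 'e set \<Rightarrow> ('e \<Rightarrow> nat) \<Rightarrow> nat \<Rightarrow> bool" where
  "rooted_at V T s j \<longleftrightarrow> j \<in> V \<and> (\<forall>e\<in>T. s e \<noteq> j) \<and> (\<forall>v\<in>V - {j}. \<exists>e\<in>T. s e = v)"

definition spanning_trees_rooted :: "nat set \<Rightarrow> 'e set \<Rightarrow> ('e \<Rightarrow> nat) \<Rightarrow> ('e \<Rightarrow> nat) \<Rightarrow> nat \<Rightarrow> 'e set set" where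
  "spanning_trees_rooted N E s t j = {T. T \<subseteq> E \<and> is_tree N T s t \<and> rooted_at N T s j}"

definition Upsilon :: "nat set \<Rightarrow> 'e set \<Rightarrow> ('e \<Rightarrow> nat) \<Rightarrow> ('e \<Rightarrow> nat) \<Rightarrow> ('e \<Rightarrow> 'a::comm_ring_1) \<Rightarrow> nat \<Rightarrow> 'a" where
  "Upsilon N E s t lbl j = (\<Sum>T\<in>spanning_trees_rooted N E s t j. \<Prod>e\<in>T. lbl e)"

definition lap_offdiag :: "'e set \<Rightarrow> ('e \<Rightarrow> nat) \<Rightarrow> ('e \<Rightarrow> nat) \<Rightarrow> ('e \<Rightarrow> 'a::comm_ring_1) \<Rightarrow> nat \<Rightarrow> nat \<Rightarrow> 'a" where
  "lap_offdiag E s t lbl i j = (\<Sum>e\<in>{e\<in>E. s e = j \<and> t e = i}. lbl e)"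

definition laplacian :: "nat set \<Rightarrow> 'e set \<Rightarrow> ('e \<Rightarrow> nat) \<Rightarrow> ('e \<Rightarrow> nat) \<Rightarrow> ('e \<Rightarrow> 'a::comm_ring_1) \<Rightarrow> nat \<Rightarrow> nat \<Rightarrow> 'a" where
  "laplacian N E s t lbl i j =
     (if i \<noteq> j then lap_offdiag E s t lbl i j
      else - (\<Sum>k\<in>N - {i}. lap_offdiag E s t lbl k i))"

(* The (m+1)x(m+1) matrix L built from A and b, with 1-based indices i j \<in> {1..m+1};
   A and b are 0-based Jordan_Normal_Form objects, so L_ij = A $$ (i-1, j-1). *)
definition Lmat :: "nat \<Rightarrow> 'a::comm_ring_1 mat \<Rightarrow> 'a vec \<Rightarrow> nat \<Rightarrow> nat \<Rightarrow> 'a" where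
  "Lmat m A b i j =
     (if i \<le> m \<and> j \<le> m then A $$ (i - 1, j - 1)
      else if i \<le> m \<and> j = m + 1 then b $ (i - 1)
      else if i = m + 1 \<and> j \<le> m then - (\<Sum>k\<in>{1..m}. A $$ (k - 1, j - 1))
      else - (\<Sum>k\<in>{1..m}. b $ (k - 1)))"

definition is_ring_hom :: "('a::comm_ring_1 \<Rightarrow> 'b::comm_ring_1) \<Rightarrow> bool" where
  "is_ring_hom f \<longleftrightarrow> f 0 = 0 \<and> f 1 = 1 \<and> (\<forall>x y. f (x + y) = f x + f y) \<and> (\<forall>x y. f (x * y) = f x * f y)"

end

(* Let K = -L, indexed from 0. Replace the root column r of K by the unit vector e_r and expand
   the determinant column by column: every term chooses one out-edge at each non-root node, i.e.
   a successor function, and its determinant is that of I minus the adjacency matrix of this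
   functional graph. It is 1 if every node reaches the root, which is exactly the case when the
   chosen edges form a spanning tree rooted there, and 0 otherwise, because the indicator of the
   nodes never reaching the root is a left null vector. Hence Upsilon(r) is the diagonal cofactor
   of K at r. The columns of K sum to zero, so all cofactors in a column agree and K adj K = 0
   says that the vector of the Upsilons lies in the kernel of L. For the block matrix L of the
   statement, the cofactor at m+1 is (-1)^m det A and the kernel relation reads
   A (Upsilon(1), ..., Upsilon(m)) + Upsilon(m+1) b = 0, which gives the solution formula. *)

theory Submission
  imports Defs
begin

lemma det_mult_eq_0_if_mult_vec_eq_0:
  fixes A :: "'a::comm_ring_1 mat"
  assumes A: "A \<in> carrier_mat n n" and v: "v \<in> carrier_vec n"
    and Av: "A *\<^sub>v v = 0\<^sub>v n" and i: "i < n"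
  shows "det A * v $ i = 0"
proof -
  have "(det A \<cdot>\<^sub>m 1\<^sub>m n) *\<^sub>v v = adj_mat A *\<^sub>v (A *\<^sub>v v)"
    using adj_mat[OF A] A v by (metis assoc_mult_mat_vec)
  also have "\<dots> = 0\<^sub>v n"
    unfolding Av using adj_mat(1)[OF A] by (auto intro!: eq_vecI simp: scalar_prod_def)
  finally have "((det A \<cdot>\<^sub>m 1\<^sub>m n) *\<^sub>v v) $ i = 0" using i by simp
  then show ?thesis using i v by simp
qed

lemma det_eq_0_if_col_sums_eq_0:
  fixes A :: "'a::comm_ring_1 mat"
  assumes A: "A \<in> carrier_mat n n" and n: "0 < n"
    and col_sums: "\<And>j. j < n \<Longrightarrow> (\<Sum>i<n. A $$ (i, j)) = 0"
  shows "det A = 0"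
proof -
  define one where "one = vec n (\<lambda>_. 1 :: 'a)"
  have "A\<^sup>T *\<^sub>v one = 0\<^sub>v n"
    using A col_sums by (auto intro!: eq_vecI simp: one_def scalar_prod_def atLeast0LessThan)
  then have "det A\<^sup>T * one $ 0 = 0"
    using A n by (intro det_mult_eq_0_if_mult_vec_eq_0[of _ n]) (auto simp: one_def)
  then show ?thesis using A n by (simp add: one_def det_transpose)
qed

lemma det_mat_sum_cols:
  fixes w :: "'o \<Rightarrow> 'a::comm_ring_1" and c :: "nat \<Rightarrow> nat \<Rightarrow> 'o \<Rightarrow> 'a"
  assumes fin: "\<And>j. j < n \<Longrightarrow> finite (Opt j)"
  shows "det (mat n n (\<lambda>(i, j). \<Sum>x\<in>Opt j. w x * c i j x)) =
    (\<Sum>F\<in>Pi\<^sub>E {0..<n} Opt. (\<Prod>j<n. w (F j)) * det (mat n n (\<lambda>(i, j). c i j (F j))))"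
proof -
  let ?P = "{p. p permutes {0..<n}}"
  have det_cols: "det (mat n n (\<lambda>(i, j). f i j)) = (\<Sum>p\<in>?P. signof p * (\<Prod>j<n. f (p j) j))"
    for f :: "nat \<Rightarrow> nat \<Rightarrow> 'a"
  proof -
    have "p j < n" if "p permutes {0..<n}" "j < n" for p j
      using that permutes_in_image[of p "{0..<n}" j] by auto
    then show ?thesis
      by (subst det_transpose[symmetric, of _ n], simp, subst det_def'[of _ n])
        (auto simp: atLeast0LessThan intro!: sum.cong prod.cong)
  qed
  have "det (mat n n (\<lambda>(i, j). \<Sum>x\<in>Opt j. w x * c i j x)) =
      (\<Sum>p\<in>?P. \<Sum>F\<in>Pi\<^sub>E {0..<n} Opt. signof p * ((\<Prod>j<n. w (F j)) * (\<Prod>j<n. c (p j) j (F j))))"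
    unfolding det_cols
    by (subst atLeast0LessThan[symmetric], subst prod_sum_PiE)
      (auto simp: fin sum_distrib_left prod.distrib atLeast0LessThan)
  also have "\<dots> = (\<Sum>F\<in>Pi\<^sub>E {0..<n} Opt. (\<Prod>j<n. w (F j)) * (\<Sum>p\<in>?P. signof p * (\<Prod>j<n. c (p j) j (F j))))"
    by (subst sum.swap) (auto simp: sum_distrib_left ac_simps intro!: sum.cong)
  finally show ?thesis unfolding det_cols .
qed

lemma det_replace_col:
  fixes K :: "'a::comm_ring_1 mat"
  assumes K: "K \<in> carrier_mat n n" and j: "j < n"
  shows "det (mat n n (\<lambda>(i, k). if k = j then v i else K $$ (i, k))) = (\<Sum>i<n. v i * cofactor K i j)"
proof -
  let ?R = "mat n n (\<lambda>(i, k). if k = j then v i else K $$ (i, k))"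
  have "mat_delete ?R i j = mat_delete K i j" if "i < n" for i
    by (rule eq_matI) (use K j that in \<open>auto simp: mat_delete_def\<close>)
  then show ?thesis
    using laplace_expansion_column[of ?R n j] j by (auto simp: cofactor_def intro!: sum.cong)
qed

lemma cofactor_eq_diag_if_col_sums_eq_0:
  fixes K :: "'a::comm_ring_1 mat"
  assumes K: "K \<in> carrier_mat n n" and col_sums: "\<And>j. j < n \<Longrightarrow> (\<Sum>i<n. K $$ (i, j)) = 0"
    and i: "i < n" and j: "j < n"
  shows "cofactor K i j = cofactor K j j"
proof -
  define e where "e = (\<lambda>k l :: nat. if k = l then 1 else 0 :: 'a)"
  let ?Q = "mat n n (\<lambda>(k, l). if l = j then e k i - e k j else K $$ (k, l))"
  have "det ?Q = (\<Sum>k<n. (e k i - e k j) * cofactor K k j)"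
    by (rule det_replace_col[OF K j])
  also have "\<dots> = (\<Sum>k<n. e k i * cofactor K k j) - (\<Sum>k<n. e k j * cofactor K k j)"
    by (simp add: left_diff_distrib sum_subtractf)
  also have "\<dots> = cofactor K i j - cofactor K j j"
    using i j by (simp add: e_def if_distrib[of "\<lambda>x. x * _"] sum.delta' cong: if_cong)
  finally have "det ?Q = cofactor K i j - cofactor K j j" .
  \<comment> \<open>Replacing column j by a difference of two unit vectors keeps all column sums zero.\<close>
  moreover have "det ?Q = 0"
  proof (rule det_eq_0_if_col_sums_eq_0[of _ n])
    fix l assume l: "l < n"
    show "(\<Sum>k<n. ?Q $$ (k, l)) = 0"
    proof (cases "l = j")
      case True
      then show ?thesis using i j l by (simp add: e_def sum_subtractf sum.delta')
    qed (use col_sums l in simp)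
  qed (use i in auto)
  ultimately show ?thesis by simp
qed

lemma sum_mult_diag_cofactor_eq_0:
  fixes K :: "'a::comm_ring_1 mat"
  assumes K: "K \<in> carrier_mat n n" and col_sums: "\<And>j. j < n \<Longrightarrow> (\<Sum>i<n. K $$ (i, j)) = 0"
    and i: "i < n"
  shows "(\<Sum>k<n. K $$ (i, k) * cofactor K k k) = 0"
proof -
  have n: "0 < n" using i by simp
  have "(K * adj_mat K) $$ (i, 0) = 0"
    using adj_mat(2)[OF K] det_eq_0_if_col_sums_eq_0[OF K n col_sums] i n by simp
  moreover have "(K * adj_mat K) $$ (i, 0) = (\<Sum>k<n. K $$ (i, k) * cofactor K 0 k)"
    using K i n adj_mat(1)[OF K] by (simp add: scalar_prod_def adj_mat_def atLeast0LessThan)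
  ultimately show ?thesis
    using cofactor_eq_diag_if_col_sums_eq_0[OF K col_sums n] by simp
qed

lemma index_mult_mat_vec_sum:
  assumes "B \<in> carrier_mat m m" "v \<in> carrier_vec m" "i < m"
  shows "(B *\<^sub>v v) $ i = (\<Sum>k<m. B $$ (i, k) * v $ k)"
  using assms by (simp add: scalar_prod_def atLeast0LessThan)

lemma mult_vec_add_eq_0_iff_kernel:
  fixes B :: "'a::comm_ring_1 mat"
  assumes B: "B \<in> carrier_mat m m" and c: "c \<in> carrier_vec m" and x: "x \<in> carrier_vec m"
    and kernel: "\<And>i. i < m \<Longrightarrow> (\<Sum>k<m. B $$ (i, k) * u k) + c $ i * u m = 0"
    and det_unit: "det B dvd 1" and u_unit: "u m dvd 1"
  shows "B *\<^sub>v x + c = 0\<^sub>v m \<longleftrightarrow> (\<forall>i<m. x $ i * u m = u i)"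
proof
  assume Bx_c: "B *\<^sub>v x + c = 0\<^sub>v m"
  have Bx: "(\<Sum>k<m. B $$ (i, k) * x $ k) = - c $ i" if i: "i < m" for i
  proof -
    have "(B *\<^sub>v x) $ i + c $ i = 0"
      using arg_cong[OF Bx_c, of "\<lambda>v. v $ i"] i B c by simp
    then show ?thesis using index_mult_mat_vec_sum[OF B x i] by (simp add: eq_neg_iff_add_eq_0)
  qed
  define z where "z = vec m (\<lambda>k. u m * x $ k - u k)"
  have z: "z \<in> carrier_vec m" by (simp add: z_def)
  have Bz: "B *\<^sub>v z = 0\<^sub>v m"
  proof (rule eq_vecI)
    fix i assume "i < dim_vec (0\<^sub>v m :: 'a vec)"
    then have i: "i < m" by simp
    have "(B *\<^sub>v z) $ i = (\<Sum>k<m. u m * (B $$ (i, k) * x $ k) - B $$ (i, k) * u k)"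
      unfolding index_mult_mat_vec_sum[OF B z i] by (simp add: z_def right_diff_distrib ac_simps)
    also have "\<dots> = u m * (\<Sum>k<m. B $$ (i, k) * x $ k) - (\<Sum>k<m. B $$ (i, k) * u k)"
      by (simp add: sum_subtractf sum_distrib_left)
    also have "\<dots> = 0"
      using kernel[OF i] unfolding Bx[OF i] eq_neg_iff_add_eq_0[symmetric] by simp
    finally show "(B *\<^sub>v z) $ i = 0\<^sub>v m $ i" using i by simp
  qed (use B in \<open>simp add: z_def\<close>)
  obtain w where w: "1 = det B * w" using det_unit by (elim dvdE)
  have "z $ i = 0" if i: "i < m" for i
  proof -
    have "z $ i = w * (det B * z $ i)"
      using w by (simp add: mult.assoc[symmetric] mult.commute[of w])
    then show ?thesis using det_mult_eq_0_if_mult_vec_eq_0[OF B z Bz i] by simp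
  qed
  then show "\<forall>i<m. x $ i * u m = u i" by (simp add: z_def mult.commute)
next
  assume sol: "\<forall>i<m. x $ i * u m = u i"
  obtain w where w: "1 = u m * w" using u_unit by (elim dvdE)
  show "B *\<^sub>v x + c = 0\<^sub>v m"
  proof (rule eq_vecI)
    fix i assume "i < dim_vec (0\<^sub>v m :: 'a vec)"
    then have i: "i < m" by simp
    have "x $ k = u k * w" if "k < m" for k
    proof -
      have "x $ k = x $ k * (u m * w)" using w by simp
      then show ?thesis using sol that by (simp add: mult.assoc[symmetric])
    qed
    then have "(B *\<^sub>v x) $ i = w * (\<Sum>k<m. B $$ (i, k) * u k)"
      unfolding index_mult_mat_vec_sum[OF B x i] by (simp add: sum_distrib_left ac_simps)
    also have "\<dots> = - c $ i * (u m * w)"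
      using kernel[OF i] by (simp add: eq_neg_iff_add_eq_0[symmetric] algebra_simps)
    finally show "(B *\<^sub>v x + c) $ i = 0\<^sub>v m $ i" using i c w by simp
  qed (use B c in simp)
qed

definition succ_mat :: "nat \<Rightarrow> nat \<Rightarrow> (nat \<Rightarrow> nat) \<Rightarrow> 'a::comm_ring_1 mat" where
  "succ_mat n r nx = mat n n (\<lambda>(i, j). (if i = j then 1 else 0) - (if j \<noteq> r \<and> i = nx j then 1 else 0))"

lemma succ_mat_carrier [simp]: "succ_mat n r nx \<in> carrier_mat n n"
  by (simp add: succ_mat_def)

lemma det_succ_mat_if_reaching:
  assumes nx: "\<And>j. j < n \<Longrightarrow> j \<noteq> r \<Longrightarrow> nx j \<noteq> j"
    and reach: "\<And>j. j < n \<Longrightarrow> \<exists>k. (nx ^^ k) j = r"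
  shows "det (succ_mat n r nx :: 'a::comm_ring_1 mat) = 1"
proof -
  let ?C = "succ_mat n r nx :: 'a mat"
  \<comment> \<open>If all factors along p are nonzero, the nodes moved by p are closed under nx and avoid r.\<close>
  have "(\<Prod>i<n. ?C $$ (i, p i)) = 0" if p: "p permutes {0..<n}" and "p \<noteq> id" for p
  proof (rule ccontr)
    assume "(\<Prod>i<n. ?C $$ (i, p i)) \<noteq> 0"
    then have nz: "?C $$ (i, p i) \<noteq> 0" if "i < n" for i
      using that by (metis finite_lessThan lessThan_iff prod_zero)
    define S where "S = {j. j < n \<and> p j \<noteq> j}"
    have S_step: "j \<noteq> r \<and> nx j \<in> S" if "j \<in> S" for j
    proof -
      have j: "j < n" "p j \<noteq> j" using that by (auto simp: S_def)
      obtain i where i: "p i = j" using permutes_surj[OF p] by (metis surjD)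
      have "i < n" "i \<noteq> j"
        using i j permutes_not_in[OF p, of i] by fastforce+
      with nz[of i] i j have "j \<noteq> r \<and> i = nx j"
        by (auto simp: succ_mat_def split: if_splits)
      then show ?thesis using \<open>i < n\<close> \<open>i \<noteq> j\<close> i by (auto simp: S_def)
    qed
    obtain a where "p a \<noteq> a" using \<open>p \<noteq> id\<close> by (metis eq_id_iff)
    then have "a \<in> S" using permutes_not_in[OF p, of a] by (force simp: S_def)
    then have "(nx ^^ k) a \<in> S" for k by (induction k) (use S_step in auto)
    then show False using reach[of a] S_step \<open>a \<in> S\<close> by (force simp: S_def)
  qed
  then have "det ?C = signof id * (\<Prod>i<n. ?C $$ (i, id i))"
    by (subst det_def'[of _ n], simp add: succ_mat_def, subst sum.remove[of _ id])
      (auto simp: permutes_id finite_permutations atLeast0LessThan)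
  also have "(\<Prod>i<n. ?C $$ (i, id i)) = 1"
  proof (rule prod.neutral, intro ballI)
    fix i assume "i \<in> {..<n}"
    then show "?C $$ (i, id i) = 1" using nx[of i] by (auto simp: succ_mat_def)
  qed
  finally show ?thesis by simp
qed

lemma succ_mat_transpose_mult_vec:
  fixes x :: "'a::comm_ring_1 vec"
  assumes x: "x \<in> carrier_vec n" and j: "j < n" and nx: "j \<noteq> r \<Longrightarrow> nx j < n"
  shows "((succ_mat n r nx)\<^sup>T *\<^sub>v x) $ j = x $ j - (if j \<noteq> r then x $ nx j else 0)"
proof -
  have "((succ_mat n r nx)\<^sup>T *\<^sub>v x) $ j =
      (\<Sum>i<n. ((if i = j then 1 else 0) - (if j \<noteq> r \<and> i = nx j then 1 else 0)) * x $ i)"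
    using x j by (simp add: succ_mat_def scalar_prod_def atLeast0LessThan ac_simps)
  also have "\<dots> = (\<Sum>i<n. if i = j then x $ i else 0) - (\<Sum>i<n. if j \<noteq> r \<and> i = nx j then x $ i else 0)"
    by (simp add: left_diff_distrib sum_subtractf if_distrib[of "\<lambda>y. y * _"] cong: if_cong)
  also have "\<dots> = x $ j - (if j \<noteq> r then x $ nx j else 0)"
    using j nx by (cases "j = r") (simp_all add: sum.delta')
  finally show ?thesis .
qed

lemma det_succ_mat_if_not_reaching:
  assumes nx: "\<And>j. j < n \<Longrightarrow> j \<noteq> r \<Longrightarrow> nx j < n"
    and j0: "j0 < n" "\<And>k. (nx ^^ k) j0 \<noteq> r"
  shows "det (succ_mat n r nx :: 'a::comm_ring_1 mat) = 0"
proof -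
  let ?C = "succ_mat n r nx :: 'a mat"
  define S where "S = {j. j < n \<and> (\<forall>k. (nx ^^ k) j \<noteq> r)}"
  have S_step: "nx j \<in> S \<longleftrightarrow> j \<in> S" if j: "j < n" "j \<noteq> r" for j
  proof -
    have "(\<forall>k. (nx ^^ k) j \<noteq> r) \<longleftrightarrow> (\<forall>k. (nx ^^ Suc k) j \<noteq> r)"
      using j(2) by (metis funpow_0 not0_implies_Suc)
    then show ?thesis using j nx[OF j] by (simp add: S_def funpow_Suc_right del: funpow.simps)
  qed
  have "r \<notin> S" by (auto simp: S_def intro: exI[of _ 0])
  define x where "x = vec n (\<lambda>j. if j \<in> S then 1 else 0 :: 'a)"
  have "?C\<^sup>T *\<^sub>v x = 0\<^sub>v n"
    using nx S_step \<open>r \<notin> S\<close>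
    by (intro eq_vecI) (auto simp: succ_mat_transpose_mult_vec x_def S_def[symmetric], simp add: succ_mat_def)
  then have "det ?C\<^sup>T * x $ j0 = 0"
    using j0 by (intro det_mult_eq_0_if_mult_vec_eq_0) (auto simp: x_def)
  moreover have "x $ j0 = 1" using j0 by (simp add: x_def S_def)
  ultimately show ?thesis by (simp add: det_transpose[OF succ_mat_carrier])
qed

definition und_rel :: "'e set \<Rightarrow> ('e \<Rightarrow> nat) \<Rightarrow> ('e \<Rightarrow> nat) \<Rightarrow> (nat \<times> nat) set" where
  "und_rel T s t = {(x, y). \<exists>e\<in>T. joins s t e x y}"

lemma und_relI: "e \<in> T \<Longrightarrow> joins s t e x y \<Longrightarrow> (x, y) \<in> und_rel T s t"
  unfolding und_rel_def by auto

lemma und_rel_rtrancl_sym: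
  assumes "(x, y) \<in> (und_rel T s t)\<^sup>*"
  shows "(y, x) \<in> (und_rel T s t)\<^sup>*"
proof -
  have "sym (und_rel T s t)" unfolding und_rel_def joins_def sym_def by auto
  then show ?thesis using assms by (meson sym_rtrancl symD)
qed

lemma funpow_in_rtrancl:
  assumes "\<And>i. i < k \<Longrightarrow> ((f ^^ i) x, f ((f ^^ i) x)) \<in> R\<^sup>*"
  shows "(x, (f ^^ k) x) \<in> R\<^sup>*"
  using assms by (induction k) (auto intro: rtrancl_trans)

lemma rtrancl_und_rel_imp_simple_walk:
  assumes "(u, v) \<in> (und_rel T s t)\<^sup>*"
  shows "\<exists>es vs. length vs = Suc (length es) \<and> vs ! 0 = u \<and> last vs = v \<and> distinct vs \<and>
    set es \<subseteq> T \<and> (\<forall>i<length es. joins s t (es ! i) (vs ! i) (vs ! Suc i))"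
  using assms
proof (induction rule: rtrancl_induct)
  case base
  show ?case by (rule exI[of _ "[]"], rule exI[of _ "[u]"]) simp
next
  case (step y z)
  from step.IH obtain es vs where W: "length vs = Suc (length es)" "vs ! 0 = u" "last vs = y"
    "distinct vs" "set es \<subseteq> T" "\<forall>i<length es. joins s t (es ! i) (vs ! i) (vs ! Suc i)"
    by blast
  from step.hyps(2) obtain e where e: "e \<in> T" "joins s t e y z" unfolding und_rel_def by auto
  have last_vs: "vs ! length es = y"
    using W(1,3) by (metis diff_Suc_1 last_conv_nth list.size(3) nat.distinct(1))
  show ?case
  proof (cases "z \<in> set vs")
    case True
    then obtain a where a: "a < length vs" "vs ! a = z" by (metis in_set_conv_nth)
    show ?thesis
    proof (rule exI[of _ "take a es"], rule exI[of _ "take (Suc a) vs"], intro conjI)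
      show "length (take (Suc a) vs) = Suc (length (take a es))" using a W by simp
      show "take (Suc a) vs ! 0 = u" using W by simp
      show "last (take (Suc a) vs) = z" using a W
        by (simp add: take_Suc_conv_app_nth)
      show "distinct (take (Suc a) vs)" using W by simp
      show "set (take a es) \<subseteq> T" using W by (meson order_trans set_take_subset)
      show "\<forall>i<length (take a es). joins s t (take a es ! i) (take (Suc a) vs ! i) (take (Suc a) vs ! Suc i)"
        using W a by auto
    qed
  next
    case False
    show ?thesis
    proof (rule exI[of _ "es @ [e]"], rule exI[of _ "vs @ [z]"], intro conjI)
      show "length (vs @ [z]) = Suc (length (es @ [e]))" using W by simp
      show "(vs @ [z]) ! 0 = u" using W by (simp add: nth_append)
      show "last (vs @ [z]) = z" by simp
      show "distinct (vs @ [z])" using W False by simp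
      show "set (es @ [e]) \<subseteq> T" using W e by simp
      show "\<forall>i<length (es @ [e]). joins s t ((es @ [e]) ! i) ((vs @ [z]) ! i) ((vs @ [z]) ! Suc i)"
      proof (intro allI impI)
        fix i assume i: "i < length (es @ [e])"
        show "joins s t ((es @ [e]) ! i) ((vs @ [z]) ! i) ((vs @ [z]) ! Suc i)"
        proof (cases "i < length es")
          case True then show ?thesis using W by (simp add: nth_append)
        next
          case False
          then have "i = length es" using i by simp
          then show ?thesis using last_vs e W by (simp add: nth_append)
        qed
      qed
    qed
  qed
qed

lemma distinct_walk_edges:
  assumes len: "length vs = Suc (length es)" and dist: "distinct vs"
    and walk: "\<forall>i<length es. joins s t (es ! i) (vs ! i) (vs ! Suc i)"
  shows "distinct es"
proof -
  have "es ! i \<noteq> es ! j" if ij: "i < j" "j < length es" for i j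
  proof
    assume "es ! i = es ! j"
    then have "vs ! i = vs ! j \<or> vs ! i = vs ! Suc j"
      using walk ij unfolding joins_def by (metis order.strict_trans)
    then show False using len dist ij by (simp add: nth_eq_iff_index_eq)
  qed
  then show ?thesis unfolding distinct_conv_nth by (metis linorder_neqE_nat)
qed

lemma und_has_cycle_if_rtrancl_without_edge:
  assumes e: "e \<in> T" and path: "(t e, s e) \<in> (und_rel (T - {e}) s t)\<^sup>*"
  shows "und_has_cycle T s t"
proof -
  obtain es vs where W: "length vs = Suc (length es)" "vs ! 0 = t e" "last vs = s e" "distinct vs"
    "set es \<subseteq> T - {e}" "\<forall>i<length es. joins s t (es ! i) (vs ! i) (vs ! Suc i)"
    using rtrancl_und_rel_imp_simple_walk[OF path] by blast
  have "distinct es" using distinct_walk_edges[OF W(1) W(4) W(6)] .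
  have last_vs: "vs ! length es = s e"
    using W by (metis diff_Suc_1 last_conv_nth length_0_conv nat.distinct(1))
  show ?thesis unfolding und_has_cycle_def
  proof (rule exI[of _ "e # es"], rule exI[of _ "s e # vs"], intro conjI)
    show "1 \<le> length (e # es)" by simp
    show "length (s e # vs) = length (e # es) + 1" using W by simp
    show "distinct (e # es)" using \<open>distinct es\<close> W by auto
    show "set (e # es) \<subseteq> T" using W e by auto
    show "(s e # vs) ! 0 = (s e # vs) ! length (e # es)" using last_vs by simp
    have bl: "butlast (s e # vs) = s e # butlast vs" using W by (cases vs) auto
    have vsd: "vs = butlast vs @ [s e]" using W by (metis append_butlast_last_id length_0_conv nat.distinct(1))
    have "distinct (butlast vs @ [s e])" using W(4) vsd by simp
    then have "distinct (butlast vs) \<and> s e \<notin> set (butlast vs)" by simp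
    then show "distinct (butlast (s e # vs))" using bl by simp
    show "\<forall>i<length (e # es). joins s t ((e # es) ! i) ((s e # vs) ! i) ((s e # vs) ! (i + 1))"
    proof (intro allI impI)
      fix i assume i: "i < length (e # es)"
      show "joins s t ((e # es) ! i) ((s e # vs) ! i) ((s e # vs) ! (i + 1))"
      proof (cases i)
        case 0 then show ?thesis using W by (simp add: joins_def)
      next
        case (Suc i') then show ?thesis using W i by simp
      qed
    qed
  qed
qed

lemma not_und_has_cycle_if_height:
  assumes height: "\<And>e. e \<in> T \<Longrightarrow> ht (s e) = Suc (ht (t e))"
    and out_unique: "\<And>e1 e2. e1 \<in> T \<Longrightarrow> e2 \<in> T \<Longrightarrow> s e1 = s e2 \<Longrightarrow> e1 = e2"
  shows "\<not> und_has_cycle T s t"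
proof
  assume "und_has_cycle T s t"
  then obtain es vs where C: "length es \<ge> 1" "length vs = length es + 1" "distinct es" "set es \<subseteq> T"
    "vs ! 0 = vs ! length es" "\<forall>i < length es. joins s t (es ! i) (vs ! i) (vs ! (i + 1))"
    unfolding und_has_cycle_def by blast
  define L where "L = length es"
  have esT: "es ! i \<in> T" if "i < L" for i using C(4) that unfolding L_def by auto
  have src: "s e = x" if "e \<in> T" "joins s t e x y" "ht y \<le> ht x" for e x y
    using that height[of e] unfolding joins_def by auto
  let ?H = "(\<lambda>i. ht (vs ! i)) ` {..<L}"
  have "Max ?H \<in> ?H" by (rule Max_in) (use C(1) in \<open>auto simp: L_def lessThan_empty_iff\<close>)
  then obtain k where k: "k < L" and k_Max: "ht (vs ! k) = Max ?H" by auto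
  have kmax: "ht (vs ! i) \<le> ht (vs ! k)" if "i < L" for i
    using that k_Max by simp
  have vsL: "vs ! L = vs ! 0" using C(5) unfolding L_def by simp
  have "ht (vs ! Suc k) \<le> ht (vs ! k)"
  proof (cases "Suc k < L")
    case True then show ?thesis using kmax by blast
  next
    case False then have "Suc k = L" using k by simp
    then show ?thesis using vsL kmax[of 0] k by simp
  qed
  moreover have "joins s t (es ! k) (vs ! k) (vs ! Suc k)" using C(6) k unfolding L_def by simp
  ultimately have s1: "s (es ! k) = vs ! k" using src[OF esT[OF k]] by blast
  define k' where "k' = (if k = 0 then L - 1 else k - 1)"
  have k'L: "k' < L" using k unfolding k'_def by auto
  have "vs ! Suc k' = vs ! k" using vsL k C(1) unfolding k'_def L_def by auto
  then have "joins s t (es ! k') (vs ! k) (vs ! k')"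
    using C(6) k'L unfolding L_def joins_def by (metis Suc_eq_plus1)
  then have s2: "s (es ! k') = vs ! k" using src[OF esT[OF k'L]] kmax[OF k'L] by blast
  have "es ! k = es ! k'" using out_unique esT[OF k] esT[OF k'L] s1 s2 by metis
  then have "k = k'" using C(3) k k'L unfolding L_def by (simp add: nth_eq_iff_index_eq)
  then have "k = 0" "L = 1" unfolding k'_def using k by (auto split: if_splits)
  then have "joins s t (es ! 0) (vs ! 0) (vs ! 0)"
    using C(5,6) unfolding L_def by (metis One_nat_def add_0 less_one)
  then show False
    using height[OF esT[of 0]] \<open>L = 1\<close> unfolding joins_def by auto
qed

lemma funpow_periodic_point:
  assumes A: "finite A" and f: "\<And>x. x \<in> A \<Longrightarrow> f x \<in> A" and v: "v \<in> A"
  obtains d a where "0 < d" "(f ^^ d) ((f ^^ a) v) = (f ^^ a) v"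
    "\<And>j. 0 < j \<Longrightarrow> j < d \<Longrightarrow> (f ^^ j) ((f ^^ a) v) \<noteq> (f ^^ a) v"
proof -
  have orbit: "(f ^^ k) v \<in> A" for k by (induction k) (use v f in auto)
  have "\<not> inj_on (\<lambda>k. (f ^^ k) v) {0..card A}"
  proof
    assume inj: "inj_on (\<lambda>k. (f ^^ k) v) {0..card A}"
    have "(\<lambda>k. (f ^^ k) v) ` {0..card A} \<subseteq> A" using orbit by auto
    from card_mono[OF A this] card_image[OF inj] show False by simp
  qed
  then obtain a b where "a < b" "(f ^^ a) v = (f ^^ b) v"
    unfolding inj_on_def by (metis linorder_neqE_nat)
  then have "(f ^^ (b - a)) ((f ^^ a) v) = (f ^^ a) v" "0 < b - a"
    by (metis funpow_add comp_apply le_add_diff_inverse2 less_imp_le, simp)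
  then have ex: "\<exists>d. 0 < d \<and> (f ^^ d) ((f ^^ a) v) = (f ^^ a) v" by blast
  define d where "d = (LEAST d. 0 < d \<and> (f ^^ d) ((f ^^ a) v) = (f ^^ a) v)"
  show ?thesis
  proof (rule that)
    show "0 < d" "(f ^^ d) ((f ^^ a) v) = (f ^^ a) v"
      using LeastI_ex[OF ex] unfolding d_def by auto
    show "(f ^^ j) ((f ^^ a) v) \<noteq> (f ^^ a) v" if "0 < j" "j < d" for j
      using not_less_Least[of j "\<lambda>d. 0 < d \<and> (f ^^ d) ((f ^^ a) v) = (f ^^ a) v"] that
      unfolding d_def by blast
  qed
qed

definition selects_out_edges :: "'e set \<Rightarrow> ('e \<Rightarrow> nat) \<Rightarrow> nat set \<Rightarrow> (nat \<Rightarrow> 'e) \<Rightarrow> bool" where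
  "selects_out_edges T s V h \<longleftrightarrow> (\<forall>v\<in>V. h v \<in> T \<and> s (h v) = v)"

definition next_node :: "('e \<Rightarrow> nat) \<Rightarrow> nat \<Rightarrow> (nat \<Rightarrow> 'e) \<Rightarrow> nat \<Rightarrow> nat" where
  "next_node t \<rho> h v = (if v = \<rho> then \<rho> else t (h v))"

definition reaches_root :: "nat set \<Rightarrow> ('e \<Rightarrow> nat) \<Rightarrow> nat \<Rightarrow> (nat \<Rightarrow> 'e) \<Rightarrow> bool" where
  "reaches_root N t \<rho> h \<longleftrightarrow> (\<forall>v\<in>N. \<exists>k. (next_node t \<rho> h ^^ k) v = \<rho>)"

definition out_edge :: "'e set \<Rightarrow> ('e \<Rightarrow> nat) \<Rightarrow> nat \<Rightarrow> 'e" where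
  "out_edge T s v = (THE e. e \<in> T \<and> s e = v)"

lemma out_edge_eq:
  assumes "e \<in> T" "\<And>e'. e' \<in> T \<Longrightarrow> s e' = s e \<Longrightarrow> e' = e"
  shows "out_edge T s (s e) = e"
  unfolding out_edge_def using assms by (intro the_equality) auto

lemma selects_out_edges_out_edge:
  assumes "\<forall>v\<in>V. \<exists>!e. e \<in> T \<and> s e = v"
  shows "selects_out_edges T s V (out_edge T s)"
  unfolding selects_out_edges_def out_edge_def
proof
  fix v assume "v \<in> V"
  then show "(THE e. e \<in> T \<and> s e = v) \<in> T \<and> s (THE e. e \<in> T \<and> s e = v) = v"
    using assms theI'[of "\<lambda>e. e \<in> T \<and> s e = v"] by blast
qed

locale rooted_multidigraph =
  fixes N :: "nat set" and E :: "'e set" and s t :: "'e \<Rightarrow> nat" and \<rho> :: nat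
  assumes finite_nodes: "finite N" and edge_nodes: "\<And>e. e \<in> E \<Longrightarrow> s e \<in> N \<and> t e \<in> N"
    and loopless: "\<And>e. e \<in> E \<Longrightarrow> s e \<noteq> t e" and root: "\<rho> \<in> N"
begin

lemma next_node_in_nodes:
  assumes "T \<subseteq> E" "selects_out_edges T s (N - {\<rho>}) h" "v \<in> N"
  shows "next_node t \<rho> h v \<in> N"
  using assms edge_nodes root by (auto simp: next_node_def selects_out_edges_def)

lemma funpow_next_node_in_nodes:
  assumes "T \<subseteq> E" "selects_out_edges T s (N - {\<rho>}) h" "v \<in> N"
  shows "(next_node t \<rho> h ^^ k) v \<in> N"
  by (induction k) (use assms next_node_in_nodes in auto)

lemma rtrancl_und_rel_if_reaches:
  assumes T: "T \<subseteq> E" and h: "selects_out_edges T s (N - {\<rho>}) h"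
    and x: "x \<in> N" and reach: "(next_node t \<rho> h ^^ k) x = \<rho>"
  shows "(x, \<rho>) \<in> (und_rel T s t)\<^sup>*"
proof -
  let ?g = "next_node t \<rho> h"
  have "(w, ?g w) \<in> (und_rel T s t)\<^sup>*" if "w \<in> N" for w
  proof (cases "w = \<rho>")
    case False
    then have "h w \<in> T" "s (h w) = w" using h that by (auto simp: selects_out_edges_def)
    then show ?thesis using False by (auto simp: next_node_def joins_def intro!: und_relI)
  qed (simp add: next_node_def)
  then have "(x, (?g ^^ k) x) \<in> (und_rel T s t)\<^sup>*"
    using funpow_next_node_in_nodes[OF T h x] by (intro funpow_in_rtrancl) simp
  then show ?thesis using reach by simp
qed

lemma reaches_root_if_acyclic:
  assumes T: "T \<subseteq> E" and acyclic: "\<not> und_has_cycle T s t"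
    and h: "selects_out_edges T s (N - {\<rho>}) h"
  shows "reaches_root N t \<rho> h"
  unfolding reaches_root_def
proof (rule ccontr)
  let ?g = "next_node t \<rho> h"
  assume "\<not> (\<forall>v\<in>N. \<exists>k. (?g ^^ k) v = \<rho>)"
  then obtain v where v: "v \<in> N" "\<And>k. (?g ^^ k) v \<noteq> \<rho>" by blast
  obtain d a where d: "0 < d" "(?g ^^ d) ((?g ^^ a) v) = (?g ^^ a) v"
    and d_min: "\<And>j. 0 < j \<Longrightarrow> j < d \<Longrightarrow> (?g ^^ j) ((?g ^^ a) v) \<noteq> (?g ^^ a) v"
    using funpow_periodic_point[where f = ?g, OF finite_nodes next_node_in_nodes[OF T h] v(1)] by metis
  define u where "u = (?g ^^ a) v"
  have orbit: "(?g ^^ j) u \<in> N - {\<rho>}" for j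
    using funpow_next_node_in_nodes[OF T h v(1), of "j + a"] v(2)[of "j + a"]
    by (simp add: u_def funpow_add)
  define e where "e = h u"
  have e: "e \<in> T" "s e = u" "?g u = t e"
    using h orbit[of 0] by (auto simp: e_def selects_out_edges_def next_node_def)
  \<comment> \<open>Following the orbit once around from ?g u back to u never uses e, whose source is u.\<close>
  have "(?g u, (?g ^^ (d - 1)) (?g u)) \<in> (und_rel (T - {e}) s t)\<^sup>*"
  proof (rule funpow_in_rtrancl)
    fix i assume "i < d - 1"
    moreover define w where "w = (?g ^^ i) (?g u)"
    ultimately have w: "w \<in> N - {\<rho>}" "w \<noteq> u"
      using orbit[of "Suc i"] d_min[of "Suc i"] by (auto simp: u_def funpow_Suc_right simp del: funpow.simps)
    then have "h w \<in> T - {e}" "s (h w) = w"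
      using h e by (auto simp: selects_out_edges_def)
    then show "(w, ?g w) \<in> (und_rel (T - {e}) s t)\<^sup>*"
      using w by (auto simp: next_node_def joins_def intro!: und_relI)
  qed
  moreover have "(?g ^^ (d - 1)) (?g u) = u"
    using d unfolding u_def[symmetric] by (metis Suc_diff_1 funpow_Suc_right comp_apply)
  ultimately have "und_has_cycle T s t"
    using e by (intro und_has_cycle_if_rtrancl_without_edge) auto
  then show False using acyclic by simp
qed

lemma out_edge_unique_if_acyclic:
  assumes T: "T \<subseteq> E" and acyclic: "\<not> und_has_cycle T s t" and rooted: "rooted_at N T s \<rho>"
    and e12: "e1 \<in> T" "e2 \<in> T" "s e1 = s e2"
  shows "e1 = e2"
proof (rule ccontr)
  assume "e1 \<noteq> e2"
  obtain h where "selects_out_edges T s (N - {\<rho>}) h"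
    using rooted bchoice[of "N - {\<rho>}" "\<lambda>v e. e \<in> T \<and> s e = v"]
    unfolding rooted_at_def selects_out_edges_def by blast
  \<comment> \<open>Select e2 at the common source: then every node reaches the root without using e1.\<close>
  then have h: "selects_out_edges T s (N - {\<rho>}) (h(s e1 := e2))"
    and h1: "selects_out_edges (T - {e1}) s (N - {\<rho>}) (h(s e1 := e2))"
    using e12 \<open>e1 \<noteq> e2\<close> by (auto simp: selects_out_edges_def)
  have "(x, \<rho>) \<in> (und_rel (T - {e1}) s t)\<^sup>*" if "x \<in> N" for x
    using reaches_root_if_acyclic[OF T acyclic h] rtrancl_und_rel_if_reaches[OF _ h1 that] T that
    unfolding reaches_root_def by blast
  moreover have "t e1 \<in> N" "s e1 \<in> N" using e12 T edge_nodes by auto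
  ultimately have "(t e1, s e1) \<in> (und_rel (T - {e1}) s t)\<^sup>*"
    by (meson rtrancl_trans und_rel_rtrancl_sym)
  then show False
    using und_has_cycle_if_rtrancl_without_edge[OF e12(1)] acyclic by blast
qed

lemma spanning_tree_rootedI:
  assumes T: "T \<subseteq> E" and no_root_edge: "\<forall>e\<in>T. s e \<noteq> \<rho>"
    and out: "\<forall>v\<in>N - {\<rho>}. \<exists>!e. e \<in> T \<and> s e = v"
    and reach: "reaches_root N t \<rho> (out_edge T s)"
  shows "T \<in> spanning_trees_rooted N E s t \<rho>"
proof -
  let ?g = "next_node t \<rho> (out_edge T s)"
  have h: "selects_out_edges T s (N - {\<rho>}) (out_edge T s)"
    using selects_out_edges_out_edge[OF out] .
  have out_unique: "e1 = e2" if "e1 \<in> T" "e2 \<in> T" "s e1 = s e2" for e1 e2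
  proof -
    have "s e1 \<in> N - {\<rho>}" using that T edge_nodes no_root_edge by auto
    then show ?thesis using out that by auto
  qed
  have to_root: "(x, \<rho>) \<in> (und_rel T s t)\<^sup>*" if "x \<in> N" for x
    using reach rtrancl_und_rel_if_reaches[OF T h that] that unfolding reaches_root_def by blast
  have "und_connected N T s t"
    unfolding und_connected_def und_rel_def[symmetric]
    using to_root und_rel_rtrancl_sym by (meson rtrancl_trans)
  moreover
  define ht where "ht x = (LEAST k. (?g ^^ k) x = \<rho>)" for x
  have "\<not> und_has_cycle T s t"
  proof (rule not_und_has_cycle_if_height[OF _ out_unique])
    fix e assume e: "e \<in> T"
    have N: "s e \<in> N" "t e \<in> N" using e T edge_nodes by auto
    have "?g (s e) = t e"
      using e no_root_edge out_edge_eq[OF e] out_unique by (simp add: next_node_def)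
    then have "(?g ^^ Suc k) (s e) = (?g ^^ k) (t e)" for k
      by (simp add: funpow_Suc_right del: funpow.simps)
    moreover have "(?g ^^ 0) (s e) \<noteq> \<rho>" using e no_root_edge by simp
    moreover obtain k where "(?g ^^ k) (s e) = \<rho>" using reach N unfolding reaches_root_def by blast
    ultimately show "ht (s e) = Suc (ht (t e))"
      unfolding ht_def by (subst Least_Suc) simp_all
  qed simp_all
  ultimately have "is_tree N T s t" using T edge_nodes by (auto simp: is_tree_def)
  moreover have "rooted_at N T s \<rho>"
    using root no_root_edge out unfolding rooted_at_def by blast
  ultimately show ?thesis using T by (simp add: spanning_trees_rooted_def)
qed

lemma spanning_trees_rooted_iff:
  "T \<in> spanning_trees_rooted N E s t \<rho> \<longleftrightarrow>
    T \<subseteq> E \<and> (\<forall>e\<in>T. s e \<noteq> \<rho>) \<and> (\<forall>v\<in>N - {\<rho>}. \<exists>!e. e \<in> T \<and> s e = v) \<and>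
    reaches_root N t \<rho> (out_edge T s)"
proof
  assume "T \<in> spanning_trees_rooted N E s t \<rho>"
  then have T: "T \<subseteq> E" and acyclic: "\<not> und_has_cycle T s t" and rooted: "rooted_at N T s \<rho>"
    by (auto simp: spanning_trees_rooted_def is_tree_def)
  have out: "\<forall>v\<in>N - {\<rho>}. \<exists>!e. e \<in> T \<and> s e = v"
    using rooted out_edge_unique_if_acyclic[OF T acyclic rooted] unfolding rooted_at_def by blast
  then show "T \<subseteq> E \<and> (\<forall>e\<in>T. s e \<noteq> \<rho>) \<and> (\<forall>v\<in>N - {\<rho>}. \<exists>!e. e \<in> T \<and> s e = v) \<and>
      reaches_root N t \<rho> (out_edge T s)"
    using T rooted reaches_root_if_acyclic[OF T acyclic selects_out_edges_out_edge[OF out]]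
    by (simp add: rooted_at_def)
qed (use spanning_tree_rootedI in blast)

end

(* Column j of root_mat (node j+1) is a sum over the out-edges of node j+1; the root column,
   a unit vector, is the single choice None. *)
definition col_choices :: "'e set \<Rightarrow> ('e \<Rightarrow> nat) \<Rightarrow> nat \<Rightarrow> nat \<Rightarrow> 'e option set" where
  "col_choices E s r j = (if j = r then {None} else Some ` {e\<in>E. s e = Suc j})"

definition choice_weight :: "('e \<Rightarrow> 'a::comm_ring_1) \<Rightarrow> 'e option \<Rightarrow> 'a" where
  "choice_weight lbl x = (case x of None \<Rightarrow> 1 | Some e \<Rightarrow> lbl e)"

definition choice_entry :: "('e \<Rightarrow> nat) \<Rightarrow> nat \<Rightarrow> nat \<Rightarrow> 'e option \<Rightarrow> 'a::comm_ring_1" where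
  "choice_entry t i j x = (case x of None \<Rightarrow> (if i = j then 1 else 0)
      | Some e \<Rightarrow> (if i = j then 1 else 0) - (if Suc i = t e then 1 else 0))"

definition choice_succ :: "('e \<Rightarrow> nat) \<Rightarrow> nat \<Rightarrow> (nat \<Rightarrow> 'e option) \<Rightarrow> nat \<Rightarrow> nat" where
  "choice_succ t r F j = (if j = r then r else t (the (F j)) - 1)"

definition choice_edges :: "nat \<Rightarrow> nat \<Rightarrow> (nat \<Rightarrow> 'e option) \<Rightarrow> 'e set" where
  "choice_edges n r F = (\<lambda>j. the (F j)) ` ({0..<n} - {r})"

locale root_laplacian = rooted_multidigraph "{1..n}" E s t "Suc r"
  for n :: nat and E :: "'e set" and s t :: "'e \<Rightarrow> nat" and r :: nat +
  assumes finite_edges: "finite E"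
begin

lemma r_less: "r < n" using root by simp

definition choice_acyclic :: "(nat \<Rightarrow> 'e option) \<Rightarrow> bool" where
  "choice_acyclic F \<longleftrightarrow> (\<forall>j<n. \<exists>k. (choice_succ t r F ^^ k) j = r)"

definition root_mat :: "('e \<Rightarrow> 'a::comm_ring_1) \<Rightarrow> 'a mat" where
  "root_mat lbl = mat n n (\<lambda>(i, j). if j = r then (if i = r then 1 else 0)
     else - laplacian {1..n} E s t lbl (Suc i) (Suc j))"

lemma neg_laplacian_eq_sum_out_edges:
  assumes i: "i \<in> {1..n}" and j: "j \<in> {1..n}"
  shows "- laplacian {1..n} E s t lbl i j =
    (\<Sum>e\<in>{e\<in>E. s e = j}. lbl e * ((if i = j then 1 else 0) - (if i = t e then 1 else 0)))"
proof (cases "i = j")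
  case False
  have "(\<Sum>e\<in>{e\<in>E. s e = j}. lbl e * ((if i = j then 1 else 0) - (if i = t e then 1 else 0)))
      = - (\<Sum>e\<in>{e\<in>E. s e = j}. if t e = i then lbl e else 0)"
    using False by (auto simp: sum_negf[symmetric] intro!: sum.cong)
  also have "\<dots> = - (\<Sum>e\<in>{e\<in>E. s e = j \<and> t e = i}. lbl e)"
    using finite_edges by (simp add: sum.inter_filter[symmetric] conj_commute conj_left_commute)
  finally show ?thesis using False by (simp add: laplacian_def lap_offdiag_def)
next
  case True
  have t_ne: "t e \<noteq> j" if "e \<in> {e\<in>E. s e = j}" for e
    using that loopless by (metis (mono_tags, lifting) mem_Collect_eq)
  have "(\<Sum>e\<in>{e\<in>E. s e = j}. lbl e * ((if i = j then 1 else 0) - (if i = t e then 1 else 0)))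
      = (\<Sum>e\<in>{e\<in>E. s e = j}. lbl e)"
  proof (rule sum.cong[OF refl])
    fix e assume "e \<in> {e\<in>E. s e = j}"
    then have "t e \<noteq> j" by (rule t_ne)
    then show "lbl e * ((if i = j then 1 else 0) - (if i = t e then 1 else 0)) = lbl e"
      using True by simp
  qed
  also have "\<dots> = (\<Sum>k\<in>{1..n} - {j}. \<Sum>e\<in>{x\<in>{e\<in>E. s e = j}. t x = k}. lbl e)"
    by (rule sum.group[symmetric]) (use finite_edges edge_nodes t_ne in auto)
  also have "\<dots> = (\<Sum>k\<in>{1..n} - {j}. lap_offdiag E s t lbl k j)"
    unfolding lap_offdiag_def by (intro sum.cong refl arg_cong[of _ _ "\<lambda>A. sum lbl A"]) auto
  finally show ?thesis using True by (simp add: laplacian_def)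
qed

lemma finite_col_choices: "finite (col_choices E s r j)"
  unfolding col_choices_def using finite_edges by auto

lemma root_mat_eq_sum_choices:
  "root_mat lbl = mat n n (\<lambda>(i, j). \<Sum>x\<in>col_choices E s r j. choice_weight lbl x * choice_entry t i j x)"
proof (rule eq_matI)
  fix i j assume "i < dim_row (mat n n (\<lambda>(i, j). \<Sum>x\<in>col_choices E s r j. choice_weight lbl x * choice_entry t i j x))"
    "j < dim_col (mat n n (\<lambda>(i, j). \<Sum>x\<in>col_choices E s r j. choice_weight lbl x * choice_entry t i j x))"
  then have i: "i < n" and j: "j < n" by auto
  show "root_mat lbl $$ (i, j) = mat n n (\<lambda>(i, j). \<Sum>x\<in>col_choices E s r j. choice_weight lbl x * choice_entry t i j x) $$ (i, j)"
  proof (cases "j = r")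
    case False
    then have "(\<Sum>x\<in>col_choices E s r j. choice_weight lbl x * choice_entry t i j x) =
        (\<Sum>e\<in>{e\<in>E. s e = Suc j}. lbl e * ((if Suc i = Suc j then 1 else 0) - (if Suc i = t e then 1 else 0)))"
      by (simp add: col_choices_def sum.reindex choice_weight_def choice_entry_def)
    also have "\<dots> = - laplacian {1..n} E s t lbl (Suc i) (Suc j)"
      by (rule neg_laplacian_eq_sum_out_edges[symmetric]) (use i j in auto)
    finally show ?thesis using False i j by (simp add: root_mat_def)
  qed (use i j in \<open>simp add: root_mat_def col_choices_def choice_weight_def choice_entry_def\<close>)
qed (auto simp: root_mat_def)

lemma col_choice:
  assumes F: "F \<in> Pi\<^sub>E {0..<n} (col_choices E s r)" and j: "j < n" "j \<noteq> r"
  shows "F j \<noteq> None" "the (F j) \<in> E" "s (the (F j)) = Suc j"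
  using PiE_mem[OF F, of j] j by (auto simp: col_choices_def)

lemma col_choice_root: "F \<in> Pi\<^sub>E {0..<n} (col_choices E s r) \<Longrightarrow> F r = None"
  using PiE_mem[of F "{0..<n}" "col_choices E s r" r] r_less by (auto simp: col_choices_def)

lemma choice_succ:
  assumes F: "F \<in> Pi\<^sub>E {0..<n} (col_choices E s r)" and j: "j < n" "j \<noteq> r"
  shows "choice_succ t r F j < n" "choice_succ t r F j \<noteq> j"
proof -
  have "t (the (F j)) \<in> {1..n}" "t (the (F j)) \<noteq> Suc j"
    using col_choice[OF F j] edge_nodes loopless by metis+
  then show "choice_succ t r F j < n" "choice_succ t r F j \<noteq> j"
    using j by (auto simp: choice_succ_def)
qed

lemma choice_mat_eq_succ_mat:
  assumes F: "F \<in> Pi\<^sub>E {0..<n} (col_choices E s r)"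
  shows "mat n n (\<lambda>(i, j). choice_entry t i j (F j)) = succ_mat n r (choice_succ t r F)"
proof (rule eq_matI)
  fix i j assume "i < dim_row (succ_mat n r (choice_succ t r F) :: 'a mat)"
    "j < dim_col (succ_mat n r (choice_succ t r F) :: 'a mat)"
  then have i: "i < n" and j: "j < n" by (auto simp: succ_mat_def)
  show "mat n n (\<lambda>(i, j). choice_entry t i j (F j)) $$ (i, j) = (succ_mat n r (choice_succ t r F) :: 'a mat) $$ (i, j)"
  proof (cases "j = r")
    case True
    then show ?thesis using i j col_choice_root[OF F] by (simp add: succ_mat_def choice_entry_def)
  next
    case False
    have "t (the (F j)) \<in> {1..n}" using col_choice[OF F j False] edge_nodes by metis
    then have "(Suc i = t (the (F j))) = (i = t (the (F j)) - 1)" by auto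
    moreover obtain e where "F j = Some e" using col_choice(1)[OF F j False] by auto
    ultimately show ?thesis using i j False by (simp add: succ_mat_def choice_entry_def choice_succ_def)
  qed
qed (auto simp: succ_mat_def)

lemma det_root_mat_eq_sum_acyclic:
  fixes lbl :: "'e \<Rightarrow> 'a::comm_ring_1"
  shows "det (root_mat lbl) =
    (\<Sum>F\<in>{F\<in>Pi\<^sub>E {0..<n} (col_choices E s r). choice_acyclic F}. \<Prod>j<n. choice_weight lbl (F j))"
proof -
  have "det (root_mat lbl) = (\<Sum>F\<in>Pi\<^sub>E {0..<n} (col_choices E s r).
      (\<Prod>j<n. choice_weight lbl (F j)) * det (succ_mat n r (choice_succ t r F) :: 'a mat))"
    unfolding root_mat_eq_sum_choices
    by (subst det_mat_sum_cols) (auto simp: finite_col_choices choice_mat_eq_succ_mat intro!: sum.cong)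
  also have "\<dots> = (\<Sum>F\<in>Pi\<^sub>E {0..<n} (col_choices E s r).
      if choice_acyclic F then \<Prod>j<n. choice_weight lbl (F j) else 0)"
  proof (rule sum.cong[OF refl])
    fix F assume F: "F \<in> Pi\<^sub>E {0..<n} (col_choices E s r)"
    show "(\<Prod>j<n. choice_weight lbl (F j)) * det (succ_mat n r (choice_succ t r F) :: 'a mat) =
        (if choice_acyclic F then \<Prod>j<n. choice_weight lbl (F j) else 0)"
    proof (cases "choice_acyclic F")
      case True
      then have "det (succ_mat n r (choice_succ t r F) :: 'a mat) = 1"
        using choice_succ(2)[OF F] by (intro det_succ_mat_if_reaching) (auto simp: choice_acyclic_def)
      then show ?thesis using True by simp
    next
      case False
      then obtain j0 where "j0 < n" "\<And>k. (choice_succ t r F ^^ k) j0 \<noteq> r"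
        unfolding choice_acyclic_def by blast
      then have "det (succ_mat n r (choice_succ t r F) :: 'a mat) = 0"
        using choice_succ(1)[OF F] by (intro det_succ_mat_if_not_reaching) auto
      then show ?thesis using False by simp
    qed
  qed
  also have "\<dots> = (\<Sum>F\<in>{F\<in>Pi\<^sub>E {0..<n} (col_choices E s r). choice_acyclic F}. \<Prod>j<n. choice_weight lbl (F j))"
    by (rule sum.inter_filter[symmetric]) (simp add: finite_PiE finite_col_choices)
  finally show ?thesis .
qed

lemma inj_on_chosen_edge:
  assumes F: "F \<in> Pi\<^sub>E {0..<n} (col_choices E s r)"
  shows "inj_on (\<lambda>j. the (F j)) ({0..<n} - {r})"
  using col_choice(3)[OF F] by (intro inj_onI) (metis DiffE atLeastLessThan_iff insertI1 nat.inject)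

lemma prod_choice_weight:
  assumes F: "F \<in> Pi\<^sub>E {0..<n} (col_choices E s r)"
  shows "(\<Prod>j<n. choice_weight lbl (F j)) = (\<Prod>e\<in>choice_edges n r F. lbl e)"
proof -
  have "(\<Prod>j<n. choice_weight lbl (F j)) = choice_weight lbl (F r) * (\<Prod>j\<in>{0..<n} - {r}. choice_weight lbl (F j))"
    using r_less by (simp add: atLeast0LessThan prod.remove)
  also have "\<dots> = (\<Prod>j\<in>{0..<n} - {r}. lbl (the (F j)))"
  proof -
    have "choice_weight lbl (F j) = lbl (the (F j))" if "j \<in> {0..<n} - {r}" for j
      using col_choice(1)[OF F, of j] that by (auto simp: choice_weight_def split: option.split)
    then show ?thesis using col_choice_root[OF F] by (simp add: choice_weight_def)
  qed
  also have "\<dots> = (\<Prod>e\<in>choice_edges n r F. lbl e)"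
    unfolding choice_edges_def by (rule prod.reindex_cong[OF inj_on_chosen_edge[OF F], symmetric]) simp_all
  finally show ?thesis .
qed

lemma in_choice_edges_source_iff:
  assumes F: "F \<in> Pi\<^sub>E {0..<n} (col_choices E s r)" and j: "j < n" "j \<noteq> r"
  shows "e \<in> choice_edges n r F \<and> s e = Suc j \<longleftrightarrow> e = the (F j)"
proof
  assume e: "e \<in> choice_edges n r F \<and> s e = Suc j"
  then obtain i where i: "i \<in> {0..<n} - {r}" "e = the (F i)"
    unfolding choice_edges_def by blast
  then show "e = the (F j)" using col_choice(3)[OF F, of i] e by simp
qed (use col_choice(3)[OF F j] j in \<open>auto simp: choice_edges_def\<close>)

lemma out_edge_choice_edges:
  assumes F: "F \<in> Pi\<^sub>E {0..<n} (col_choices E s r)" and j: "j < n" "j \<noteq> r"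
  shows "out_edge (choice_edges n r F) s (Suc j) = the (F j)"
  unfolding out_edge_def in_choice_edges_source_iff[OF F j] by simp

lemma funpow_next_node_choice:
  assumes F: "F \<in> Pi\<^sub>E {0..<n} (col_choices E s r)" and j: "j < n"
  shows "(next_node t (Suc r) (out_edge (choice_edges n r F) s) ^^ k) (Suc j) = Suc ((choice_succ t r F ^^ k) j)"
proof (induction k)
  case (Suc k)
  define i where "i = (choice_succ t r F ^^ k) j"
  have "i < n" unfolding i_def by (induction k) (use j choice_succ(1)[OF F] in \<open>auto simp: choice_succ_def r_less\<close>)
  moreover have "t (the (F i)) \<in> {1..n}" if "i \<noteq> r"
    using col_choice(2)[OF F \<open>i < n\<close> that] edge_nodes by blast
  ultimately have "next_node t (Suc r) (out_edge (choice_edges n r F) s) (Suc i) = Suc (choice_succ t r F i)"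
    using out_edge_choice_edges[OF F] by (auto simp: next_node_def choice_succ_def)
  then show ?case using Suc.IH by (simp add: i_def)
qed simp

lemma choice_acyclic_iff_reaches_root:
  assumes F: "F \<in> Pi\<^sub>E {0..<n} (col_choices E s r)"
  shows "choice_acyclic F \<longleftrightarrow> reaches_root {1..n} t (Suc r) (out_edge (choice_edges n r F) s)"
  unfolding choice_acyclic_def reaches_root_def image_Suc_lessThan[symmetric]
  using funpow_next_node_choice[OF F] by auto

lemma choice_edges_in_spanning_trees:
  assumes F: "F \<in> Pi\<^sub>E {0..<n} (col_choices E s r)" and acyclic: "choice_acyclic F"
  shows "choice_edges n r F \<in> spanning_trees_rooted {1..n} E s t (Suc r)"
proof -
  have "\<exists>!e. e \<in> choice_edges n r F \<and> s e = v" if v: "v \<in> {1..n} - {Suc r}" for v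
  proof -
    obtain j where "v = Suc j" using v by (cases v) auto
    then have j: "v = Suc j" "j < n" "j \<noteq> r" using v by auto
    then show ?thesis using in_choice_edges_source_iff[OF F j(2,3)] by simp
  qed
  moreover have "the (F j) \<in> E \<and> s (the (F j)) \<noteq> Suc r" if "j \<in> {0..<n} - {r}" for j
    using col_choice(2,3)[OF F, of j] that by auto
  then have "choice_edges n r F \<subseteq> E" "\<forall>e\<in>choice_edges n r F. s e \<noteq> Suc r"
    unfolding choice_edges_def by blast+
  ultimately show ?thesis
    using choice_acyclic_iff_reaches_root[OF F] acyclic unfolding spanning_trees_rooted_iff by blast
qed

lemma inj_on_choice_edges: "inj_on (choice_edges n r) (Pi\<^sub>E {0..<n} (col_choices E s r))"
proof (rule inj_onI)
  fix F G assume F: "F \<in> Pi\<^sub>E {0..<n} (col_choices E s r)" and G: "G \<in> Pi\<^sub>E {0..<n} (col_choices E s r)"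
    and eq: "choice_edges n r F = choice_edges n r G"
  show "F = G"
  proof (rule PiE_ext[OF F G])
    fix j assume "j \<in> {0..<n}"
    then show "F j = G j"
      using out_edge_choice_edges[OF F, of j] out_edge_choice_edges[OF G, of j] eq
        col_choice(1)[OF F, of j] col_choice(1)[OF G, of j] col_choice_root[OF F] col_choice_root[OF G]
      by (cases "j = r") auto
  qed
qed

lemma spanning_tree_eq_choice_edges:
  assumes T: "T \<in> spanning_trees_rooted {1..n} E s t (Suc r)"
  obtains F where "F \<in> Pi\<^sub>E {0..<n} (col_choices E s r)" "choice_acyclic F" "choice_edges n r F = T"
proof -
  from T have TE: "T \<subseteq> E" and no_root_edge: "\<forall>e\<in>T. s e \<noteq> Suc r"
    and out: "\<forall>v\<in>{1..n} - {Suc r}. \<exists>!e. e \<in> T \<and> s e = v"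
    and reach: "reaches_root {1..n} t (Suc r) (out_edge T s)"
    unfolding spanning_trees_rooted_iff by auto
  have out_edge: "out_edge T s (Suc j) \<in> T \<and> s (out_edge T s (Suc j)) = Suc j" if "j < n" "j \<noteq> r" for j
    using selects_out_edges_out_edge[OF out] that by (auto simp: selects_out_edges_def)
  define F where "F j = (if j < n then if j = r then None else Some (out_edge T s (Suc j)) else undefined)" for j
  have F: "F \<in> Pi\<^sub>E {0..<n} (col_choices E s r)"
  proof (rule PiE_I)
    fix j assume "j \<in> {0..<n}"
    then show "F j \<in> col_choices E s r j"
      using out_edge[of j] TE by (auto simp: F_def col_choices_def)
  qed (simp add: F_def)
  have "choice_edges n r F = T"
  proof
    show "choice_edges n r F \<subseteq> T"
    proof
      fix e assume "e \<in> choice_edges n r F"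
      then obtain j where "j \<in> {0..<n} - {r}" "e = the (F j)"
        unfolding choice_edges_def by blast
      then show "e \<in> T" using out_edge[of j] by (simp add: F_def)
    qed
    show "T \<subseteq> choice_edges n r F"
    proof
      fix e assume e: "e \<in> T"
      then obtain j where j: "s e = Suc j" "j < n" "j \<noteq> r"
        using TE edge_nodes no_root_edge by (cases "s e") fastforce+
      have "out_edge T s (Suc j) = e"
        using out_edge_eq[OF e] out j e TE edge_nodes no_root_edge
        by (metis (no_types, lifting) DiffI singletonD subsetD)
      then show "e \<in> choice_edges n r F"
        using j by (auto simp: choice_edges_def F_def intro!: image_eqI[of _ _ j])
    qed
  qed
  moreover have "choice_acyclic F"
    using choice_acyclic_iff_reaches_root[OF F] reach \<open>choice_edges n r F = T\<close> by simp
  ultimately show ?thesis using F that by blast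
qed

lemma bij_betw_choice_edges:
  "bij_betw (choice_edges n r) {F\<in>Pi\<^sub>E {0..<n} (col_choices E s r). choice_acyclic F}
    (spanning_trees_rooted {1..n} E s t (Suc r))"
proof (rule bij_betw_imageI)
  show "inj_on (choice_edges n r) {F\<in>Pi\<^sub>E {0..<n} (col_choices E s r). choice_acyclic F}"
    by (rule inj_on_subset[OF inj_on_choice_edges]) blast
  show "choice_edges n r ` {F\<in>Pi\<^sub>E {0..<n} (col_choices E s r). choice_acyclic F} =
      spanning_trees_rooted {1..n} E s t (Suc r)"
    using choice_edges_in_spanning_trees spanning_tree_eq_choice_edges by blast
qed

theorem det_root_mat:
  fixes lbl :: "'e \<Rightarrow> 'a::comm_ring_1"
  shows "det (root_mat lbl) = Upsilon {1..n} E s t lbl (Suc r)"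
proof -
  have "det (root_mat lbl) =
      (\<Sum>F\<in>{F\<in>Pi\<^sub>E {0..<n} (col_choices E s r). choice_acyclic F}. \<Prod>e\<in>choice_edges n r F. lbl e)"
    unfolding det_root_mat_eq_sum_acyclic by (rule sum.cong) (auto simp: prod_choice_weight)
  also have "\<dots> = Upsilon {1..n} E s t lbl (Suc r)"
    unfolding Upsilon_def by (rule sum.reindex_bij_betw[OF bij_betw_choice_edges])
  finally show ?thesis .
qed

end

definition neg_laplacian_mat :: "nat \<Rightarrow> 'e set \<Rightarrow> ('e \<Rightarrow> nat) \<Rightarrow> ('e \<Rightarrow> nat) \<Rightarrow> ('e \<Rightarrow> 'a::comm_ring_1) \<Rightarrow> 'a mat" where
  "neg_laplacian_mat n E s t lbl = mat n n (\<lambda>(i, j). - laplacian {1..n} E s t lbl (Suc i) (Suc j))"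

lemma neg_laplacian_mat_carrier [simp]: "neg_laplacian_mat n E s t lbl \<in> carrier_mat n n"
  by (simp add: neg_laplacian_mat_def)

lemma index_neg_laplacian_mat [simp]:
  "i < n \<Longrightarrow> j < n \<Longrightarrow> neg_laplacian_mat n E s t lbl $$ (i, j) = - laplacian {1..n} E s t lbl (Suc i) (Suc j)"
  by (simp add: neg_laplacian_mat_def)

lemma laplacian_col_sum_eq_0:
  assumes j: "j \<in> N" and fin: "finite N"
  shows "(\<Sum>i\<in>N. laplacian N E s t lbl i j) = 0"
proof -
  have "(\<Sum>i\<in>N. laplacian N E s t lbl i j) =
      laplacian N E s t lbl j j + (\<Sum>i\<in>N - {j}. lap_offdiag E s t lbl i j)"
    using j fin by (simp add: sum.remove laplacian_def)
  then show ?thesis by (simp add: laplacian_def)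
qed

lemma neg_laplacian_mat_col_sum_eq_0:
  assumes "j < n"
  shows "(\<Sum>i<n. neg_laplacian_mat n E s t lbl $$ (i, j)) = 0"
proof -
  have "(\<Sum>i<n. neg_laplacian_mat n E s t lbl $$ (i, j)) = - (\<Sum>i\<in>Suc ` {..<n}. laplacian {1..n} E s t lbl i (Suc j))"
    using assms by (simp add: sum.reindex sum_negf)
  also have "\<dots> = 0"
    unfolding image_Suc_lessThan using assms by (simp add: laplacian_col_sum_eq_0)
  finally show ?thesis .
qed

theorem Upsilon_eq_cofactor:
  fixes lbl :: "'e \<Rightarrow> 'a::comm_ring_1"
  assumes wf: "multidigraph_wf {1..n} E s t" and loopless: "no_self_loops E s t" and r: "r < n"
  shows "Upsilon {1..n} E s t lbl (Suc r) = cofactor (neg_laplacian_mat n E s t lbl) r r"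
proof -
  interpret root_laplacian n E s t r
    by unfold_locales (use wf loopless r in \<open>auto simp: multidigraph_wf_def no_self_loops_def\<close>)
  let ?K = "neg_laplacian_mat n E s t lbl"
  have "Upsilon {1..n} E s t lbl (Suc r) = det (root_mat lbl)"
    by (rule det_root_mat[symmetric])
  also have "root_mat lbl = mat n n (\<lambda>(i, k). if k = r then (if i = r then 1 else 0) else ?K $$ (i, k))"
    by (rule eq_matI) (auto simp: root_mat_def)
  also have "det \<dots> = (\<Sum>i<n. (if i = r then 1 else 0) * cofactor ?K i r)"
    by (rule det_replace_col[OF neg_laplacian_mat_carrier r])
  also have "\<dots> = cofactor ?K r r"
    using r by (simp add: if_distrib[of "\<lambda>y. y * _"] sum.delta' cong: if_cong)
  finally show ?thesis .
qed

lemma laplacian_mult_Upsilon_eq_0: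
  fixes lbl :: "'e \<Rightarrow> 'a::comm_ring_1"
  assumes wf: "multidigraph_wf {1..n} E s t" and loopless: "no_self_loops E s t" and i: "i < n"
  shows "(\<Sum>k<n. laplacian {1..n} E s t lbl (Suc i) (Suc k) * Upsilon {1..n} E s t lbl (Suc k)) = 0"
proof -
  let ?K = "neg_laplacian_mat n E s t lbl"
  have "(\<Sum>k<n. ?K $$ (i, k) * cofactor ?K k k) = 0"
    using sum_mult_diag_cofactor_eq_0[OF neg_laplacian_mat_carrier neg_laplacian_mat_col_sum_eq_0 i] .
  also have "(\<Sum>k<n. ?K $$ (i, k) * cofactor ?K k k) =
      - (\<Sum>k<n. laplacian {1..n} E s t lbl (Suc i) (Suc k) * Upsilon {1..n} E s t lbl (Suc k))"
    unfolding sum_negf[symmetric]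
  proof (rule sum.cong[OF refl])
    fix k assume "k \<in> {..<n}"
    then show "?K $$ (i, k) * cofactor ?K k k =
        - (laplacian {1..n} E s t lbl (Suc i) (Suc k) * Upsilon {1..n} E s t lbl (Suc k))"
      using i Upsilon_eq_cofactor[OF wf loopless, of k lbl] by simp
  qed
  finally show ?thesis by simp
qed

lemma Upsilon_block_relations:
  fixes A :: "'a::comm_ring_1 mat" and lbl :: "'e \<Rightarrow> 'a"
  assumes A: "A \<in> carrier_mat m m" and b: "b \<in> carrier_vec m"
    and wf: "multidigraph_wf {1..m+1} E s t" and loopless: "no_self_loops E s t"
    and lap: "\<forall>i\<in>{1..m+1}. \<forall>j\<in>{1..m+1}. laplacian {1..m+1} E s t lbl i j = Lmat m A b i j"
  shows "det A = (-1) ^ m * Upsilon {1..m+1} E s t lbl (Suc m)"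
    and "\<And>i. i < m \<Longrightarrow>
      (\<Sum>k<m. A $$ (i, k) * Upsilon {1..m+1} E s t lbl (Suc k)) + b $ i * Upsilon {1..m+1} E s t lbl (Suc m) = 0"
proof -
  have A_lap: "A $$ (i, k) = laplacian {1..m+1} E s t lbl (Suc i) (Suc k)" if "i < m" "k < m" for i k
    using lap that by (auto simp: Lmat_def)
  have b_lap: "b $ i = laplacian {1..m+1} E s t lbl (Suc i) (Suc m)" if "i < m" for i
    using lap that by (auto simp: Lmat_def)
  have "mat_delete (neg_laplacian_mat (m+1) E s t lbl) m m = (-1) \<cdot>\<^sub>m A"
    using A A_lap by (intro eq_matI) (auto simp: mat_delete_def neg_laplacian_mat_def)
  then have "Upsilon {1..m+1} E s t lbl (Suc m) = (-1) ^ m * det A"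
    using Upsilon_eq_cofactor[OF wf loopless, of m lbl] A by (simp add: cofactor_def power_add)
  then show "det A = (-1) ^ m * Upsilon {1..m+1} E s t lbl (Suc m)"
    by (simp add: power_mult_distrib[symmetric])
  show "(\<Sum>k<m. A $$ (i, k) * Upsilon {1..m+1} E s t lbl (Suc k)) + b $ i * Upsilon {1..m+1} E s t lbl (Suc m) = 0"
    if "i < m" for i
    using laplacian_mult_Upsilon_eq_0[OF wf loopless, of i lbl] that A_lap b_lap by simp
qed

lemma map_mult_vec_add_eq_0_iff_kernel:
  fixes A :: "'a::comm_ring_1 mat" and phi :: "'a \<Rightarrow> 'b::comm_ring_1"
  assumes phi: "comm_ring_hom phi"
    and A: "A \<in> carrier_mat m m" and b: "b \<in> carrier_vec m" and x: "x \<in> carrier_vec m"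
    and kernel: "\<And>i. i < m \<Longrightarrow> (\<Sum>k<m. A $$ (i, k) * u k) + b $ i * u m = 0"
    and det_A: "det A = (-1) ^ m * u m" and unit: "phi (u m) dvd 1"
  shows "map_mat phi A *\<^sub>v x + map_vec phi b = 0\<^sub>v m \<longleftrightarrow> (\<forall>i<m. x $ i * phi (u m) = phi (u i))"
proof (rule mult_vec_add_eq_0_iff_kernel[where u = "\<lambda>k. phi (u k)"])
  interpret comm_ring_hom phi by (rule phi)
  show "(\<Sum>k<m. map_mat phi A $$ (i, k) * phi (u k)) + map_vec phi b $ i * phi (u m) = 0" if "i < m" for i
    using arg_cong[OF kernel[OF that], of phi] that A b by (simp add: hom_distribs)
  have "(-1) ^ m dvd (1 :: 'b)"
    by (rule dvdI[of _ _ "(-1) ^ m"]) (simp add: power_mult_distrib[symmetric])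
  then show "det (map_mat phi A) dvd 1"
    using unit det_A by (simp add: hom_distribs unit_prod)
qed (use A b x unit in simp_all)

theorem proposition2p2:
  fixes m :: nat
    and A :: "'a::comm_ring_1 mat" and b :: "'a vec"
    and E :: "'e set" and s t :: "'e \<Rightarrow> nat" and lbl :: "'e \<Rightarrow> 'a"
    and phi :: "'a \<Rightarrow> 'b::comm_ring_1"
  assumes "m \<ge> 1"
    and "A \<in> carrier_mat m m" and "b \<in> carrier_vec m"
    and "multidigraph_wf {1..m+1} E s t" and "no_self_loops E s t"
    and "\<forall>i\<in>{1..m+1}. \<forall>j\<in>{1..m+1}. laplacian {1..m+1} E s t lbl i j = Lmat m A b i j"
  shows "det A = (-1) ^ m * Upsilon {1..m+1} E s t lbl (m + 1) \<and>
         (det A \<noteq> 0 \<longrightarrow> is_ring_hom phi \<longrightarrow> inj phi \<longrightarrow>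
           phi (Upsilon {1..m+1} E s t lbl (m + 1)) dvd 1 \<longrightarrow>
           (\<forall>x :: 'b vec. x \<in> carrier_vec m \<longrightarrow>
              (map_mat phi A *\<^sub>v x + map_vec phi b = 0\<^sub>v m \<longleftrightarrow>
               (\<forall>i\<in>{1..m}. x $ (i - 1) * phi (Upsilon {1..m+1} E s t lbl (m + 1))
                             = phi (Upsilon {1..m+1} E s t lbl i)))))"
proof -
  note block = Upsilon_block_relations[OF assms(2-6)]
  show ?thesis
  proof (intro conjI impI allI)
    show "det A = (-1) ^ m * Upsilon {1..m+1} E s t lbl (m + 1)" using block(1) by simp
    fix x :: "'b vec"
    assume "is_ring_hom phi" and unit: "phi (Upsilon {1..m+1} E s t lbl (m + 1)) dvd 1"
      and x: "x \<in> carrier_vec m"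
    then have "comm_ring_hom phi" by unfold_locales (auto simp: is_ring_hom_def)
    from map_mult_vec_add_eq_0_iff_kernel[OF this assms(2,3) x block(2) block(1)] unit
    show "map_mat phi A *\<^sub>v x + map_vec phi b = 0\<^sub>v m \<longleftrightarrow>
        (\<forall>i\<in>{1..m}. x $ (i - 1) * phi (Upsilon {1..m+1} E s t lbl (m + 1))
          = phi (Upsilon {1..m+1} E s t lbl i))"
      unfolding image_Suc_lessThan[of m, symmetric] by (simp, blast)
  qed
qed

end
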